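(* Let $Y$ be a nominal $\mathrm{Sb}$-set and let $y\in Y$ be supported by a set of cardinality at most $1$. Then $\{m\cdot y\mid m\in\mathrm{Sb}\}=\{g\cdot y\mid g\in\mathrm{Perm}\}$.
   Context: $\mathbb{A}$ is a countably infinite set of atoms; $\mathrm{Sb}$ is the monoid of functions $\mathbb{A}\to\mathbb{A}$ that are the identity outside a finite set; $\mathrm{Perm}\subseteq\mathrm{Sb}$ its bijections. An $\mathrm{Sb}$-set has a monoid action of $\mathrm{Sb}$; $C\subseteq\mathbb{A}$ supports $y$ if for all $m_1,m_2\in\mathrm{Sb}$ with $m_1|_C=m_2|_C$ we have $m_1y=m_2y$; a nominal $\mathrm{Sb}$-set is one in which every element has a finite support. *)

theory Defs
  imports "HOL-Library.Countable_Set"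
begin

text \<open>Atoms are the elements of a type 'a assumed countably infinite.
Sb: finitely supported endofunctions; Perm: bijective ones.\<close>

definition Sb :: "('a \<Rightarrow> 'a) set" where
  "Sb = {m. finite {a. m a \<noteq> a}}"

definition Perm :: "('a \<Rightarrow> 'a) set" where
  "Perm = {m \<in> Sb. bij m}"

definition Sb_set :: "(('a \<Rightarrow> 'a) \<Rightarrow> 'b \<Rightarrow> 'b) \<Rightarrow> bool" where
  "Sb_set act \<longleftrightarrow> (\<forall>y. act id y = y) \<and>
     (\<forall>m1\<in>Sb. \<forall>m2\<in>Sb. \<forall>y. act (m1 \<circ> m2) y = act m1 (act m2 y))"

definition supports :: "(('a \<Rightarrow> 'a) \<Rightarrow> 'b \<Rightarrow> 'b) \<Rightarrow> 'a set \<Rightarrow> 'b \<Rightarrow> bool" where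
  "supports act C y \<longleftrightarrow>
     (\<forall>m1\<in>Sb. \<forall>m2\<in>Sb. (\<forall>a\<in>C. m1 a = m2 a) \<longrightarrow> act m1 y = act m2 y)"

definition nominal_Sb_set :: "(('a \<Rightarrow> 'a) \<Rightarrow> 'b \<Rightarrow> 'b) \<Rightarrow> bool" where
  "nominal_Sb_set act \<longleftrightarrow> Sb_set act \<and> (\<forall>y. \<exists>C. finite C \<and> supports act C y)"

end

theory Submission
  imports Defs
begin

text \<open>Since y is determined by how a substitution acts on its support C, it suffices that
every m \<in> Sb can be matched on C by a finite permutation. This is possible whenever m is
injective on the finite set C, in particular when C has at most one element: the bijection
m|C : C \<rightarrow> m`C is completed to a permutation of C \<union> m`C by any bijection between the
equinumerous complements.\<close>

lemma supportsD:
  assumes "supports act C y" "m1 \<in> Sb" "m2 \<in> Sb" "\<And>a. a \<in> C \<Longrightarrow> m1 a = m2 a"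
  shows "act m1 y = act m2 y"
  using assms unfolding supports_def by blast

lemma bij_betw_finite_in_Perm:
  assumes "bij_betw p S S" "finite S" "\<And>a. a \<notin> S \<Longrightarrow> p a = a"
  shows "p \<in> Perm"
proof -
  have "bij_betw p (- S) (- S)"
    using bij_betw_id by (rule bij_betw_cong[THEN iffD2, rotated]) (simp add: assms(3))
  with assms(1) have "bij_betw p (S \<union> - S) (S \<union> - S)"
    by (rule bij_betw_combine) blast
  then have "bij p"
    by simp
  moreover have "{a. p a \<noteq> a} \<subseteq> S"
    using assms(3) by blast
  then have "finite {a. p a \<noteq> a}"
    using assms(2) by (rule finite_subset)
  ultimately show ?thesis
    unfolding Perm_def Sb_def by blast
qed

lemma inj_on_finite_extends_to_Perm:
  assumes "finite C" "inj_on m C"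
  obtains g where "g \<in> Perm" "\<And>a. a \<in> C \<Longrightarrow> g a = m a"
proof -
  define S where "S = C \<union> m ` C"
  have "finite S"
    using assms(1) by (simp add: S_def)
  have "card (S - C) = card (S - m ` C)"
    using \<open>finite S\<close> assms card_image[OF assms(2)]
    by (simp add: S_def card_Diff_subset)
  then obtain h where h: "bij_betw h (S - C) (S - m ` C)"
    using \<open>finite S\<close> finite_same_card_bij by blast
  define g where "g a = (if a \<in> C then m a else if a \<in> S then h a else a)" for a
  have "bij_betw g C (m ` C)"
    using inj_on_imp_bij_betw[OF assms(2)]
    by (rule bij_betw_cong[THEN iffD2, rotated]) (simp add: g_def)
  moreover have "bij_betw g (S - C) (S - m ` C)"
    using h by (rule bij_betw_cong[THEN iffD1, rotated]) (simp add: g_def)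
  ultimately have "bij_betw g (C \<union> (S - C)) (m ` C \<union> (S - m ` C))"
    by (rule bij_betw_combine) blast
  moreover have "C \<union> (S - C) = S" "m ` C \<union> (S - m ` C) = S"
    unfolding S_def by blast+
  ultimately have "bij_betw g S S"
    by (simp only:)
  then have "g \<in> Perm"
    using \<open>finite S\<close> by (rule bij_betw_finite_in_Perm) (simp add: S_def g_def)
  then show thesis
    by (rule that) (simp add: g_def)
qed

lemma supports_act_eq_Perm:
  assumes "supports act C y" "finite C" "m \<in> Sb" "inj_on m C"
  obtains g where "g \<in> Perm" "act m y = act g y"
proof -
  obtain g where g: "g \<in> Perm" "\<And>a. a \<in> C \<Longrightarrow> g a = m a"
    using inj_on_finite_extends_to_Perm assms(2,4) by blast
  have "g \<in> Sb"
    using g(1) by (simp add: Perm_def)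
  with assms(1,3) have "act m y = act g y"
    by (rule supportsD) (simp add: g(2))
  with g(1) show thesis
    by (rule that)
qed

theorem mainTheorem13:
  fixes act :: "('a \<Rightarrow> 'a) \<Rightarrow> 'b \<Rightarrow> 'b" and y :: 'b and C :: "'a set"
  assumes "countable (UNIV :: 'a set)" and "infinite (UNIV :: 'a set)"
    and "nominal_Sb_set act"
    and "supports act C y" and "finite C" and "card C \<le> 1"
  shows "{act m y | m. m \<in> Sb} = {act g y | g. g \<in> Perm}"
proof
  show "{act g y | g. g \<in> Perm} \<subseteq> {act m y | m. m \<in> Sb}"
    unfolding Perm_def by blast
next
  have "\<forall>a\<in>C. \<forall>b\<in>C. a = b"
    using card_le_Suc0_iff_eq[OF \<open>finite C\<close>] \<open>card C \<le> 1\<close> by simp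
  then have "inj_on m C" for m :: "'a \<Rightarrow> 'a"
    unfolding inj_on_def by blast
  with assms(4,5) show "{act m y | m. m \<in> Sb} \<subseteq> {act g y | g. g \<in> Perm}"
    by (blast elim: supports_act_eq_Perm)
qed

end
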